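(* Let $\mathcal{D}$ be an algebra and vector lattice of bounded real functions with the Stone property, and $(\mathcal{E},\mathcal{D})$ a bilinear form such that $(\mathcal{E},\mathcal{D}_0)$ has zero killing and all functionals $L_f(h):=2\mathcal{E}(fh,f)-\mathcal{E}(f^2,h)$, $f\in\mathcal{D}_0$, are positive on $\mathcal{D}$. Then $\mathcal{E}(f)=\frac12\|L_f\|_{\mathcal{D}'}$ for every $f\in\mathcal{D}_0$.
   Context: $\|L\|_{\mathcal{D}'}=\sup\{|L(h)|:h\in\mathcal{D},\|h\|_{\sup}\le1\}$. Stone property: $f\wedge1\in\mathcal{D}$. Bilinear form: symmetric nonnegative definite bilinear, $\mathcal{E}(f)=\mathcal{E}(f,f)$. For $f\ge0$ in $\mathcal{D}$, $E_f:=\{\varphi\in\mathcal{D}:\mathbf 1_{\{f>0\}}\le\varphi\le\mathbf 1\}$; $\mathcal{D}_0^+=\{f\ge0:E_f\ne\emptyset\}$, $\mathcal{D}_0=\mathrm{span}\,\mathcal{D}_0^+$. $(\mathcal{E},\mathcal{D}_0)$ has zero killing if $\inf\{\mathcal{E}(f,\varphi):\varphi\in E_f\}=0$ for all $f\in\mathcal{D}_0^+$. A functional is positive if it is nonnegative on nonnegative functions. *)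

theory Defs
  imports "HOL-Analysis.Analysis"
begin

definition bounded_fun :: "('a \<Rightarrow> real) \<Rightarrow> bool" where
  "bounded_fun f \<longleftrightarrow> (\<exists>B. \<forall>x. \<bar>f x\<bar> \<le> B)"

definition algebra_lattice :: "('a \<Rightarrow> real) set \<Rightarrow> bool" where
  "algebra_lattice D \<longleftrightarrow>
     (\<forall>f\<in>D. bounded_fun f) \<and>
     (\<lambda>x. 0) \<in> D \<and>
     (\<forall>f\<in>D. \<forall>g\<in>D. (\<lambda>x. f x + g x) \<in> D) \<and>
     (\<forall>f\<in>D. \<forall>c::real. (\<lambda>x. c * f x) \<in> D) \<and>
     (\<forall>f\<in>D. \<forall>g\<in>D. (\<lambda>x. f x * g x) \<in> D) \<and>
     (\<forall>f\<in>D. \<forall>g\<in>D. (\<lambda>x. max (f x) (g x)) \<in> D) \<and>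
     (\<forall>f\<in>D. \<forall>g\<in>D. (\<lambda>x. min (f x) (g x)) \<in> D)"

definition stone_property :: "('a \<Rightarrow> real) set \<Rightarrow> bool" where
  "stone_property D \<longleftrightarrow> (\<forall>f\<in>D. (\<lambda>x. min (f x) 1) \<in> D)"

definition bilinear_form :: "(('a \<Rightarrow> real) \<Rightarrow> ('a \<Rightarrow> real) \<Rightarrow> real) \<Rightarrow> ('a \<Rightarrow> real) set \<Rightarrow> bool" where
  "bilinear_form E D \<longleftrightarrow>
     (\<forall>f\<in>D. \<forall>g\<in>D. E f g = E g f) \<and>
     (\<forall>f\<in>D. \<forall>g\<in>D. \<forall>h\<in>D. \<forall>a b::real.
        E (\<lambda>x. a * f x + b * g x) h = a * E f h + b * E g h) \<and>
     (\<forall>f\<in>D. E f f \<ge> 0)"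

definition E_set :: "('a \<Rightarrow> real) set \<Rightarrow> ('a \<Rightarrow> real) \<Rightarrow> ('a \<Rightarrow> real) set" where
  "E_set D f = {\<phi>\<in>D. \<forall>x. (if f x > 0 then 1 else 0) \<le> \<phi> x \<and> \<phi> x \<le> 1}"

definition D0plus :: "('a \<Rightarrow> real) set \<Rightarrow> ('a \<Rightarrow> real) set" where
  "D0plus D = {f\<in>D. (\<forall>x. f x \<ge> 0) \<and> E_set D f \<noteq> {}}"

definition D0 :: "('a \<Rightarrow> real) set \<Rightarrow> ('a \<Rightarrow> real) set" where
  "D0 D = {f. \<exists>n::nat. \<exists>c::nat \<Rightarrow> real. \<exists>g::nat \<Rightarrow> ('a \<Rightarrow> real).
              (\<forall>i<n. g i \<in> D0plus D) \<and> f = (\<lambda>x. \<Sum>i<n. c i * g i x)}"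

definition zero_killing :: "(('a \<Rightarrow> real) \<Rightarrow> ('a \<Rightarrow> real) \<Rightarrow> real) \<Rightarrow> ('a \<Rightarrow> real) set \<Rightarrow> bool" where
  "zero_killing E D \<longleftrightarrow> (\<forall>f\<in>D0plus D. (INF \<phi>\<in>E_set D f. ereal (E f \<phi>)) = 0)"

definition positive_functional :: "(('a \<Rightarrow> real) \<Rightarrow> real) \<Rightarrow> ('a \<Rightarrow> real) set \<Rightarrow> bool" where
  "positive_functional L D \<longleftrightarrow> (\<forall>h\<in>D. (\<forall>x. h x \<ge> 0) \<longrightarrow> L h \<ge> 0)"

text \<open>Dual norm (extended-real valued, so unboundedness is not hidden).\<close>
definition dual_norm :: "(('a \<Rightarrow> real) \<Rightarrow> real) \<Rightarrow> ('a \<Rightarrow> real) set \<Rightarrow> ereal" where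
  "dual_norm L D = (SUP h\<in>{h\<in>D. \<forall>x. \<bar>h x\<bar> \<le> 1}. ereal \<bar>L h\<bar>)"

definition Lfun :: "(('a \<Rightarrow> real) \<Rightarrow> ('a \<Rightarrow> real) \<Rightarrow> real) \<Rightarrow> ('a \<Rightarrow> real) \<Rightarrow> ('a \<Rightarrow> real) \<Rightarrow> real" where
  "Lfun E f h = 2 * E (\<lambda>x. f x * h x) f - E (\<lambda>x. f x ^ 2) h"

end

theory Submission
  imports Defs
begin

(*
  Write g = f^2 and call phi in D a cutoff of f if 0 <= phi <= 1 and phi = 1 wherever f =/= 0;
  the cutoffs of f are exactly the elements of E_g (E_set_square).  Every f in D0 has a cutoff
  (a finite max of cutoffs of the summands, D0_cutoff), so g lies in D0plus and zero killing
  applies to g: E(g,phi) >= 0 for every cutoff phi, and these values have infimum 0.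

  For a cutoff phi we have f phi = f, hence L_f(phi) = 2 E(f) - E(g,phi) (Lfun_cutoff); this
  gives the lower bound ||L_f|| >= 2 E(f).  For the upper bound (Lfun_upper_bound) decompose
  |h| <= 1 as  h = h phi + h+ (1 - phi) - h- (1 - phi).  Positivity gives |L_f(h phi)| <= L_f(phi),
  and each k = h+-(1 - phi) vanishes on {f =/= 0}, so L_f(k) = -E(g,k), which lies in
  [0, E(g,phi)] because phi + k is again a cutoff (Lfun_complement_bound).  Adding up,
  |L_f(h)| <= 2 E(f).
*)

lemma algebra_latticeD:
  assumes "algebra_lattice D"
  shows algebra_lattice_zero: "(\<lambda>x. 0) \<in> D"
    and algebra_lattice_add: "\<And>f g. f \<in> D \<Longrightarrow> g \<in> D \<Longrightarrow> (\<lambda>x. f x + g x) \<in> D"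
    and algebra_lattice_scale: "\<And>f c. f \<in> D \<Longrightarrow> (\<lambda>x. c * f x) \<in> D"
    and algebra_lattice_mult: "\<And>f g. f \<in> D \<Longrightarrow> g \<in> D \<Longrightarrow> (\<lambda>x. f x * g x) \<in> D"
    and algebra_lattice_max: "\<And>f g. f \<in> D \<Longrightarrow> g \<in> D \<Longrightarrow> (\<lambda>x. max (f x) (g x)) \<in> D"
  using assms unfolding algebra_lattice_def by auto

lemma algebra_lattice_diff:
  assumes "algebra_lattice D" "f \<in> D" "g \<in> D"
  shows "(\<lambda>x. f x - g x) \<in> D"
  using algebra_lattice_add[OF assms(1,2) algebra_lattice_scale[OF assms(1,3), of "-1"]] by simp

lemma algebra_lattice_square:
  assumes "algebra_lattice D" "f \<in> D"
  shows "(\<lambda>x. f x ^ 2) \<in> D"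
  using algebra_lattice_mult[OF assms(1,2,2)] by (simp add: power2_eq_square)

text \<open>For a, p in [0,1] the number a(1 - p) lies in [0, 1 - p]; this is what makes the parts
  h+-(1 - phi) of a function |h| <= 1 admissible perturbations of a cutoff phi.\<close>
lemma complement_part_bounds:
  fixes a p :: real
  assumes "0 \<le> a" "a \<le> 1" "0 \<le> p" "p \<le> 1"
  shows "0 \<le> a - a * p \<and> p + (a - a * p) \<le> 1"
proof -
  have "a * (1 - p) \<le> 1 - p" using assms by (intro mult_left_le_one_le) auto
  moreover have "0 \<le> a * (1 - p)" using assms by simp
  ultimately show ?thesis by (simp add: algebra_simps)
qed

section \<open>Cutoffs\<close>

definition cutoff :: "('a \<Rightarrow> real) set \<Rightarrow> ('a \<Rightarrow> real) \<Rightarrow> ('a \<Rightarrow> real) \<Rightarrow> bool" where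
  "cutoff D f \<phi> \<longleftrightarrow> \<phi> \<in> D \<and> (\<forall>x. 0 \<le> \<phi> x \<and> \<phi> x \<le> 1) \<and> (\<forall>x. f x \<noteq> 0 \<longrightarrow> \<phi> x = 1)"

lemma E_set_square: "E_set D (\<lambda>x. f x ^ 2) = {\<phi>. cutoff D f \<phi>}"
proof (intro set_eqI iffI; simp)
  fix \<phi> assume "\<phi> \<in> E_set D (\<lambda>x. f x ^ 2)"
  then have "\<phi> \<in> D" and bounds: "\<And>x. (if f x ^ 2 > 0 then 1 else 0) \<le> \<phi> x \<and> \<phi> x \<le> 1"
    unfolding E_set_def by auto
  moreover have "0 \<le> \<phi> x \<and> \<phi> x \<le> 1" for x using bounds[of x] by (auto split: if_splits)
  moreover have "\<phi> x = 1" if "f x \<noteq> 0" for x using bounds[of x] that by auto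
  ultimately show "cutoff D f \<phi>" unfolding cutoff_def by blast
next
  fix \<phi> assume "cutoff D f \<phi>"
  then show "\<phi> \<in> E_set D (\<lambda>x. f x ^ 2)"
    unfolding cutoff_def E_set_def by (auto simp: zero_less_power_eq)
qed

lemma cutoff_of_zero:
  assumes "algebra_lattice D"
  shows "cutoff D (\<lambda>x. 0) (\<lambda>x. 0)"
  using algebra_lattice_zero[OF assms] unfolding cutoff_def by simp

lemma cutoff_lincomb:
  assumes "algebra_lattice D" "cutoff D f \<phi>" "cutoff D g \<psi>"
  shows "cutoff D (\<lambda>x. f x + c * g x) (\<lambda>x. max (\<phi> x) (\<psi> x))"
proof -
  have "max (\<phi> x) (\<psi> x) = 1" if "f x + c * g x \<noteq> 0" for x
  proof -
    have "f x \<noteq> 0 \<or> g x \<noteq> 0" using that by auto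
    then have "\<phi> x = 1 \<or> \<psi> x = 1" using assms(2,3) unfolding cutoff_def by blast
    moreover have "\<phi> x \<le> 1" "\<psi> x \<le> 1" using assms(2,3) unfolding cutoff_def by auto
    ultimately show ?thesis by linarith
  qed
  moreover have "0 \<le> max (\<phi> x) (\<psi> x) \<and> max (\<phi> x) (\<psi> x) \<le> 1" for x
    using assms(2,3) unfolding cutoff_def by (auto simp: le_max_iff_disj)
  ultimately show ?thesis
    using assms algebra_lattice_max[OF assms(1)] unfolding cutoff_def by auto
qed

lemma D0plus_cutoff:
  assumes "g \<in> D0plus D"
  obtains \<psi> where "cutoff D g \<psi>"
proof -
  from assms obtain \<psi> where nonneg: "\<forall>x. g x \<ge> 0" and "\<psi> \<in> E_set D g"
    unfolding D0plus_def by auto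
  then have "\<psi> \<in> D" and bounds: "\<And>x. (if g x > 0 then 1 else 0) \<le> \<psi> x \<and> \<psi> x \<le> 1"
    unfolding E_set_def by auto
  moreover have "0 \<le> \<psi> x \<and> \<psi> x \<le> 1" for x using bounds[of x] by (auto split: if_splits)
  moreover have "\<psi> x = 1" if "g x \<noteq> 0" for x
  proof -
    have "g x > 0" using nonneg[rule_format, of x] that by linarith
    then show ?thesis using bounds[of x] by simp
  qed
  ultimately show thesis using that unfolding cutoff_def by blast
qed

lemma D0_cutoff:
  assumes al: "algebra_lattice D" and "f \<in> D0 D"
  shows "f \<in> D" and "\<exists>\<phi>. cutoff D f \<phi>"
proof -
  have "\<exists>(n::nat) c g. (\<forall>i<n. g i \<in> D0plus D) \<and> f = (\<lambda>x. \<Sum>i<n. c i * g i x)"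
    using assms(2) unfolding D0_def by simp
  then obtain n :: nat and c g
    where g: "\<forall>i<n. g i \<in> D0plus D" and f: "f = (\<lambda>x. \<Sum>i<n. c i * g i x)"
    by blast
  have "(\<lambda>x. \<Sum>i<m. c i * g i x) \<in> D \<and> (\<exists>\<phi>. cutoff D (\<lambda>x. \<Sum>i<m. c i * g i x) \<phi>)"
    if "m \<le> n" for m
    using that
  proof (induction m)
    case 0
    then show ?case using algebra_lattice_zero[OF al] cutoff_of_zero[OF al] by auto
  next
    case (Suc m)
    then have gm: "g m \<in> D0plus D" using g by simp
    then have "g m \<in> D" unfolding D0plus_def by simp
    obtain \<psi> where "cutoff D (g m) \<psi>" using D0plus_cutoff[OF gm] .
    moreover obtain \<phi> where "cutoff D (\<lambda>x. \<Sum>i<m. c i * g i x) \<phi>"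
      and sum: "(\<lambda>x. \<Sum>i<m. c i * g i x) \<in> D" using Suc by auto
    ultimately show ?case
      using cutoff_lincomb[OF al, of _ \<phi> "g m" \<psi> "c m"]
        algebra_lattice_add[OF al sum algebra_lattice_scale[OF al \<open>g m \<in> D\<close>]]
      by auto
  qed
  then show "f \<in> D" and "\<exists>\<phi>. cutoff D f \<phi>" using f by auto
qed

lemma square_in_D0plus:
  assumes "algebra_lattice D" "f \<in> D" "cutoff D f \<phi>"
  shows "(\<lambda>x. f x ^ 2) \<in> D0plus D"
proof -
  have "{\<psi>. cutoff D f \<psi>} \<noteq> {}" using assms(3) by blast
  then show ?thesis
    using algebra_lattice_square[OF assms(1,2)] by (simp add: D0plus_def E_set_square)
qed

lemma zero_killing_nonneg:
  assumes "zero_killing E D" "g \<in> D0plus D" "\<psi> \<in> E_set D g"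
  shows "E g \<psi> \<ge> 0"
proof -
  have "(INF \<phi>\<in>E_set D g. ereal (E g \<phi>)) \<le> ereal (E g \<psi>)" using assms(3) by (rule INF_lower)
  then show ?thesis using assms(1,2) unfolding zero_killing_def by simp
qed

lemma zero_killing_approx:
  assumes "zero_killing E D" "g \<in> D0plus D" "e > 0"
  shows "\<exists>\<psi>\<in>E_set D g. E g \<psi> < e"
proof -
  have "(INF \<phi>\<in>E_set D g. ereal (E g \<phi>)) < ereal e"
    using assms unfolding zero_killing_def by simp
  then show ?thesis by (simp add: INF_less_iff)
qed

lemma positive_functionalD:
  "positive_functional L D \<Longrightarrow> h \<in> D \<Longrightarrow> (\<forall>x. 0 \<le> h x) \<Longrightarrow> 0 \<le> L h"
  unfolding positive_functional_def by blast

context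
  fixes D :: "('a \<Rightarrow> real) set" and E :: "('a \<Rightarrow> real) \<Rightarrow> ('a \<Rightarrow> real) \<Rightarrow> real"
  assumes al: "algebra_lattice D" and bf: "bilinear_form E D"
begin

lemma form_symmetric: "f \<in> D \<Longrightarrow> g \<in> D \<Longrightarrow> E f g = E g f"
  using bf unfolding bilinear_form_def by auto

lemma form_linear_left:
  "f \<in> D \<Longrightarrow> g \<in> D \<Longrightarrow> h \<in> D \<Longrightarrow> E (\<lambda>x. a * f x + b * g x) h = a * E f h + b * E g h"
  using bf unfolding bilinear_form_def by auto

lemma form_linear_right:
  assumes "f \<in> D" "g \<in> D" "h \<in> D"
  shows "E h (\<lambda>x. a * f x + b * g x) = a * E h f + b * E h g"
proof -
  have "(\<lambda>x. a * f x + b * g x) \<in> D"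
    using assms by (intro algebra_lattice_add[OF al] algebra_lattice_scale[OF al])
  then have "E h (\<lambda>x. a * f x + b * g x) = E (\<lambda>x. a * f x + b * g x) h"
    using assms(3) by (rule form_symmetric[symmetric])
  also have "\<dots> = a * E f h + b * E g h" using form_linear_left[OF assms] .
  also have "\<dots> = a * E h f + b * E h g" using assms by (simp add: form_symmetric)
  finally show ?thesis .
qed

lemma form_zero_left: "h \<in> D \<Longrightarrow> E (\<lambda>x. 0) h = 0"
  using form_linear_left[of h h h 0 0] by simp

lemma Lfun_linear:
  assumes f: "f \<in> D" and "h1 \<in> D" "h2 \<in> D"
  shows "Lfun E f (\<lambda>x. a * h1 x + b * h2 x) = a * Lfun E f h1 + b * Lfun E f h2"
proof -
  have "(\<lambda>x. f x * (a * h1 x + b * h2 x)) = (\<lambda>x. a * (f x * h1 x) + b * (f x * h2 x))"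
    by (auto simp: algebra_simps)
  moreover have "(\<lambda>x. f x * h1 x) \<in> D" "(\<lambda>x. f x * h2 x) \<in> D"
    using algebra_lattice_mult[OF al] assms by auto
  ultimately show ?thesis
    unfolding Lfun_def
    using form_linear_left[of "\<lambda>x. f x * h1 x" "\<lambda>x. f x * h2 x" f a b]
      form_linear_right[OF assms(2,3) algebra_lattice_square[OF al f], of a b] f
    by (simp add: algebra_simps)
qed

lemma Lfun_add: "f \<in> D \<Longrightarrow> h1 \<in> D \<Longrightarrow> h2 \<in> D \<Longrightarrow>
    Lfun E f (\<lambda>x. h1 x + h2 x) = Lfun E f h1 + Lfun E f h2"
  using Lfun_linear[of f h1 h2 1 1] by simp

lemma Lfun_diff: "f \<in> D \<Longrightarrow> h1 \<in> D \<Longrightarrow> h2 \<in> D \<Longrightarrow>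
    Lfun E f (\<lambda>x. h1 x - h2 x) = Lfun E f h1 - Lfun E f h2"
  using Lfun_linear[of f h1 h2 1 "-1"] by simp

text \<open>A positive linear functional is monotone, hence |u| <= v implies |L u| <= L v.\<close>
lemma positive_Lfun_abs_le:
  assumes f: "f \<in> D" and pos: "positive_functional (Lfun E f) D"
    and u: "u \<in> D" and v: "v \<in> D" and le: "\<forall>x. \<bar>u x\<bar> \<le> v x"
  shows "\<bar>Lfun E f u\<bar> \<le> Lfun E f v"
proof -
  have "0 \<le> v x - u x \<and> 0 \<le> v x + u x" for x
    using le[rule_format, of x] unfolding abs_le_iff by linarith
  then have "Lfun E f (\<lambda>x. v x - u x) \<ge> 0" "Lfun E f (\<lambda>x. v x + u x) \<ge> 0"
    using positive_functionalD[OF pos algebra_lattice_diff[OF al v u]]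
      positive_functionalD[OF pos algebra_lattice_add[OF al v u]] by auto
  then show ?thesis using Lfun_diff[OF f v u] Lfun_add[OF f v u] by linarith
qed

text \<open>Since f phi = f for a cutoff phi, L_f(phi) = 2 E(f) - E(g,phi) with g = f^2.\<close>
lemma Lfun_cutoff:
  assumes "cutoff D f \<phi>"
  shows "Lfun E f \<phi> = 2 * E f f - E (\<lambda>x. f x ^ 2) \<phi>"
proof -
  have "f x * \<phi> x = f x" for x
    using assms unfolding cutoff_def by (cases "f x = 0") auto
  then have "(\<lambda>x. f x * \<phi> x) = f" by (rule ext)
  then show ?thesis unfolding Lfun_def by simp
qed

lemma Lfun_vanishing:
  assumes "f \<in> D" "\<forall>x. f x \<noteq> 0 \<longrightarrow> k x = 0"
  shows "Lfun E f k = - E (\<lambda>x. f x ^ 2) k"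
proof -
  have "f x * k x = 0" for x using assms(2) by (cases "f x = 0") auto
  then have "(\<lambda>x. f x * k x) = (\<lambda>x. 0)" by (rule ext)
  then show ?thesis unfolding Lfun_def using form_zero_left[OF assms(1)] by simp
qed

text \<open>If phi is a cutoff and k >= 0 vanishes on the support of f with phi + k <= 1, then
  phi + k is again a cutoff; together with E(g, .) >= 0 on cutoffs and positivity of L_f
  this confines L_f(k) = -E(g,k) to the interval [0, E(g,phi)].\<close>
lemma Lfun_complement_bound:
  assumes f: "f \<in> D" and pos: "positive_functional (Lfun E f) D"
    and nonneg: "\<And>\<psi>. cutoff D f \<psi> \<Longrightarrow> E (\<lambda>x. f x ^ 2) \<psi> \<ge> 0"
    and \<phi>: "cutoff D f \<phi>" and k: "k \<in> D" "\<forall>x. 0 \<le> k x \<and> \<phi> x + k x \<le> 1"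
    and vanish: "\<forall>x. f x \<noteq> 0 \<longrightarrow> k x = 0"
  shows "0 \<le> Lfun E f k \<and> Lfun E f k \<le> E (\<lambda>x. f x ^ 2) \<phi>"
proof -
  let ?g = "\<lambda>x. f x ^ 2"
  have "\<phi> \<in> D" using \<phi> unfolding cutoff_def by simp
  have "\<forall>x. 0 \<le> \<phi> x + k x \<and> \<phi> x + k x \<le> 1" using \<phi> k(2) unfolding cutoff_def by auto
  moreover have "\<forall>x. f x \<noteq> 0 \<longrightarrow> \<phi> x + k x = 1" using \<phi> vanish unfolding cutoff_def by auto
  ultimately have "cutoff D f (\<lambda>x. \<phi> x + k x)"
    using algebra_lattice_add[OF al \<open>\<phi> \<in> D\<close> k(1)] unfolding cutoff_def by blast
  then have "0 \<le> E ?g (\<lambda>x. \<phi> x + k x)" by (rule nonneg)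
  also have "\<dots> = E ?g \<phi> + E ?g k"
    using form_linear_right[OF \<open>\<phi> \<in> D\<close> k(1) algebra_lattice_square[OF al f], of 1 1] by simp
  finally have "- E ?g k \<le> E ?g \<phi>" by simp
  moreover have "Lfun E f k \<ge> 0" using positive_functionalD[OF pos k(1)] k(2) by blast
  ultimately show ?thesis using Lfun_vanishing[OF f vanish] by simp
qed

section \<open>The dual norm of L_f\<close>

lemma Lfun_upper_bound:
  assumes f: "f \<in> D" and pos: "positive_functional (Lfun E f) D"
    and nonneg: "\<And>\<psi>. cutoff D f \<psi> \<Longrightarrow> E (\<lambda>x. f x ^ 2) \<psi> \<ge> 0"
    and \<phi>: "cutoff D f \<phi>" and h: "h \<in> D" "\<forall>x. \<bar>h x\<bar> \<le> 1"
  shows "\<bar>Lfun E f h\<bar> \<le> 2 * E f f"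
proof -
  let ?L = "Lfun E f"
  have \<phi>D: "\<phi> \<in> D" and \<phi>b: "\<forall>x. 0 \<le> \<phi> x \<and> \<phi> x \<le> 1" and \<phi>1: "\<forall>x. f x \<noteq> 0 \<longrightarrow> \<phi> x = 1"
    using \<phi> unfolding cutoff_def by auto
  define hp where "hp = (\<lambda>x. max (h x) 0)"
  define hm where "hm = (\<lambda>x. max (- h x) 0)"
  define kp where "kp = (\<lambda>x. hp x - hp x * \<phi> x)"
  define km where "km = (\<lambda>x. hm x - hm x * \<phi> x)"
  define h\<phi> where "h\<phi> = (\<lambda>x. h x * \<phi> x)"
  have hpD: "hp \<in> D" and hmD: "hm \<in> D"
    unfolding hp_def hm_def
    using algebra_lattice_max[OF al _ algebra_lattice_zero[OF al]]
      h(1) algebra_lattice_scale[OF al h(1), of "-1"] by auto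
  have kpD: "kp \<in> D" and kmD: "km \<in> D" and h\<phi>D: "h\<phi> \<in> D"
    unfolding kp_def km_def h\<phi>_def using hpD hmD h(1) \<phi>D
    by (auto intro: algebra_lattice_diff[OF al] algebra_lattice_mult[OF al])
  have "0 \<le> hp x \<and> hp x \<le> 1" "0 \<le> hm x \<and> hm x \<le> 1" for x
    using h(2) unfolding hp_def hm_def by (auto simp: abs_le_iff)
  then have "\<forall>x. 0 \<le> kp x \<and> \<phi> x + kp x \<le> 1" "\<forall>x. 0 \<le> km x \<and> \<phi> x + km x \<le> 1"
    unfolding kp_def km_def using complement_part_bounds \<phi>b by auto
  moreover have "\<forall>x. f x \<noteq> 0 \<longrightarrow> kp x = 0" "\<forall>x. f x \<noteq> 0 \<longrightarrow> km x = 0"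
    unfolding kp_def km_def using \<phi>1 by auto
  ultimately have kp_bound: "0 \<le> ?L kp \<and> ?L kp \<le> E (\<lambda>x. f x ^ 2) \<phi>"
    and km_bound: "0 \<le> ?L km \<and> ?L km \<le> E (\<lambda>x. f x ^ 2) \<phi>"
    using Lfun_complement_bound[OF f pos nonneg \<phi>] kpD kmD by auto
  have "\<bar>h\<phi> x\<bar> \<le> \<phi> x" for x
    using h(2) \<phi>b mult_right_mono[of "\<bar>h x\<bar>" 1 "\<phi> x"] unfolding h\<phi>_def by (auto simp: abs_mult)
  then have main_bound: "\<bar>?L h\<phi>\<bar> \<le> 2 * E f f - E (\<lambda>x. f x ^ 2) \<phi>"
    using positive_Lfun_abs_le[OF f pos h\<phi>D \<phi>D] Lfun_cutoff[OF \<phi>] by simp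
  have "h = (\<lambda>x. (h\<phi> x + kp x) - km x)"
    unfolding h\<phi>_def kp_def km_def hp_def hm_def by (auto simp: max_def algebra_simps)
  then have "?L h = ?L h\<phi> + ?L kp - ?L km"
    using Lfun_diff[OF f algebra_lattice_add[OF al h\<phi>D kpD] kmD] Lfun_add[OF f h\<phi>D kpD] by metis
  then show ?thesis using main_bound kp_bound km_bound by (simp add: abs_le_iff)
qed

text \<open>Combining the upper bound with the lower bound L_f(phi) = 2 E(f) - E(g,phi), where
  E(g,phi) can be made arbitrarily small.\<close>
lemma dual_norm_Lfun:
  assumes f: "f \<in> D" and pos: "positive_functional (Lfun E f) D"
    and nonneg: "\<And>\<psi>. cutoff D f \<psi> \<Longrightarrow> E (\<lambda>x. f x ^ 2) \<psi> \<ge> 0"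
    and approx: "\<And>e. e > 0 \<Longrightarrow> \<exists>\<psi>. cutoff D f \<psi> \<and> E (\<lambda>x. f x ^ 2) \<psi> < e"
  shows "dual_norm (Lfun E f) D = ereal (2 * E f f)"
  unfolding dual_norm_def
proof (rule antisym)
  let ?B = "{h \<in> D. \<forall>x. \<bar>h x\<bar> \<le> 1}"
  obtain \<phi>0 where "cutoff D f \<phi>0" using approx[of 1] by auto
  then show "(SUP h\<in>?B. ereal \<bar>Lfun E f h\<bar>) \<le> ereal (2 * E f f)"
    using Lfun_upper_bound[OF f pos nonneg] by (intro SUP_least) auto
  show "ereal (2 * E f f) \<le> (SUP h\<in>?B. ereal \<bar>Lfun E f h\<bar>)"
  proof (rule ereal_le_epsilon2)
    fix e :: real assume "e > 0"
    then obtain \<phi> where \<phi>: "cutoff D f \<phi>" "E (\<lambda>x. f x ^ 2) \<phi> < e" using approx by blast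
    then have "\<phi> \<in> ?B" unfolding cutoff_def by auto
    then have in_sup: "ereal \<bar>Lfun E f \<phi>\<bar> \<le> (SUP h\<in>?B. ereal \<bar>Lfun E f h\<bar>)"
      by (rule SUP_upper)
    have "ereal (2 * E f f) \<le> ereal \<bar>Lfun E f \<phi>\<bar> + ereal e"
      using Lfun_cutoff[OF \<phi>(1)] \<phi>(2) by simp
    also have "\<dots> \<le> (SUP h\<in>?B. ereal \<bar>Lfun E f h\<bar>) + ereal e"
      using in_sup by (rule add_right_mono)
    finally show "ereal (2 * E f f) \<le> (SUP h\<in>?B. ereal \<bar>Lfun E f h\<bar>) + ereal e" .
  qed
qed

end

theorem corollaryC:
  fixes D :: "('a \<Rightarrow> real) set" and E :: "('a \<Rightarrow> real) \<Rightarrow> ('a \<Rightarrow> real) \<Rightarrow> real"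
  assumes "algebra_lattice D" and "stone_property D" and "bilinear_form E D"
    and "zero_killing E D"
    and "\<forall>f\<in>D0 D. positive_functional (Lfun E f) D"
    and "f \<in> D0 D"
  shows "ereal (E f f) = dual_norm (Lfun E f) D / 2"
proof -
  note al = assms(1) and bf = assms(3) and zk = assms(4)
  have f: "f \<in> D" and "\<exists>\<phi>. cutoff D f \<phi>" using D0_cutoff[OF al assms(6)] by auto
  then have g: "(\<lambda>x. f x ^ 2) \<in> D0plus D" using square_in_D0plus[OF al] by blast
  have "dual_norm (Lfun E f) D = ereal (2 * E f f)"
  proof (rule dual_norm_Lfun[OF al bf f])
    show "positive_functional (Lfun E f) D" using assms(5,6) by blast
    show "E (\<lambda>x. f x ^ 2) \<psi> \<ge> 0" if "cutoff D f \<psi>" for \<psi>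
      using zero_killing_nonneg[OF zk g] that by (simp add: E_set_square)
    show "\<exists>\<psi>. cutoff D f \<psi> \<and> E (\<lambda>x. f x ^ 2) \<psi> < e" if "e > 0" for e
      using zero_killing_approx[OF zk g that] by (simp add: E_set_square)
  qed
  then show ?thesis by simp
qed

end
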